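(* Let $m\geq1$ and $k\geq2$ be integers, and let $H$ be an $m$-connected, $(n-km+2m-1)$-closed graph of order $n\geq(7k-2)m+4$. If $e(H)\geq\binom{n-(k-1)m-2}{2}+(k-1)m^2+(k+1)m+3$, then $\omega(H)\geq n-(k-1)m-1$.
   Context: All graphs are finite and simple; $e(H)$ is the number of edges and $\omega(H)$ the clique number. A graph $H$ is $l$-closed if every pair of nonadjacent vertices $u,v$ satisfies $d_H(u)+d_H(v)<l$. *)

theory Defs
  imports Main
begin

definition simple_graph :: "'a set \<Rightarrow> ('a \<Rightarrow> 'a \<Rightarrow> bool) \<Rightarrow> bool" where
  "simple_graph V adj \<longleftrightarrow> finite V \<and>
     (\<forall>u v. adj u v \<longrightarrow> u \<in> V \<and> v \<in> V \<and> u \<noteq> v) \<and>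
     (\<forall>u v. adj u v \<longrightarrow> adj v u)"

definition degree :: "'a set \<Rightarrow> ('a \<Rightarrow> 'a \<Rightarrow> bool) \<Rightarrow> 'a \<Rightarrow> nat" where
  "degree V adj v = card {u \<in> V. adj v u}"

definition num_edges :: "'a set \<Rightarrow> ('a \<Rightarrow> 'a \<Rightarrow> bool) \<Rightarrow> nat" where
  "num_edges V adj = card {{u, v} | u v. u \<in> V \<and> v \<in> V \<and> adj u v}"

definition is_clique :: "'a set \<Rightarrow> ('a \<Rightarrow> 'a \<Rightarrow> bool) \<Rightarrow> 'a set \<Rightarrow> bool" where
  "is_clique V adj S \<longleftrightarrow> S \<subseteq> V \<and> (\<forall>u\<in>S. \<forall>v\<in>S. u \<noteq> v \<longrightarrow> adj u v)"

definition clique_number :: "'a set \<Rightarrow> ('a \<Rightarrow> 'a \<Rightarrow> bool) \<Rightarrow> nat" where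
  "clique_number V adj = Max {card S | S. is_clique V adj S}"

definition connected_on :: "'a set \<Rightarrow> ('a \<Rightarrow> 'a \<Rightarrow> bool) \<Rightarrow> bool" where
  "connected_on W adj \<longleftrightarrow> W \<noteq> {} \<and>
     (\<forall>u\<in>W. \<forall>v\<in>W. (\<lambda>x y. adj x y \<and> x \<in> W \<and> y \<in> W)\<^sup>*\<^sup>* u v)"

definition k_connected :: "nat \<Rightarrow> 'a set \<Rightarrow> ('a \<Rightarrow> 'a \<Rightarrow> bool) \<Rightarrow> bool" where
  "k_connected m V adj \<longleftrightarrow> card V > m \<and>
     (\<forall>X. X \<subseteq> V \<and> card X < m \<longrightarrow> connected_on (V - X) adj)"

definition l_closed :: "int \<Rightarrow> 'a set \<Rightarrow> ('a \<Rightarrow> 'a \<Rightarrow> bool) \<Rightarrow> bool" where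
  "l_closed l V adj \<longleftrightarrow> (\<forall>u\<in>V. \<forall>v\<in>V. u \<noteq> v \<and> \<not> adj u v \<longrightarrow>
     int (degree V adj u + degree V adj v) < l)"

end

theory Submission
  imports Defs
begin

text \<open>Write \<open>K = (k - 1) m\<close>, \<open>l = n - K + m - 1\<close> for the closure parameter, and \<open>\<omega>\<close> for the
clique number. An \<open>l\<close>-closed graph obeys two edge bounds. A vertex outside a maximum clique \<open>C\<close>
misses some vertex of \<open>C\<close>, whose degree is at least \<open>\<omega> - 1\<close>, so its own degree is at most
\<open>l - \<omega>\<close>; hence \<open>2e \<le> \<omega>(\<omega> - 1) + 2(n - \<omega>)(l - \<omega>)\<close>. The vertices of degree at least
\<open>l/2\<close> are pairwise adjacent, so there are at most \<open>\<omega>\<close> of them, and all others have degree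
below \<open>l/2\<close>; hence \<open>4e \<le> 2\<omega>(n - 1) + (n - \<omega>)(l - 1)\<close>. If \<open>\<omega> \<le> n - K - 2\<close>, the linear
bound contradicts the edge hypothesis for \<open>\<omega> \<le> (n - K)/2\<close>, and the convex quadratic bound
does so for larger \<open>\<omega>\<close>, because it does so at both ends of that range.\<close>

lemma two_mult_choose_two: "2 * int (c choose 2) = int c * (int c - 1)"
proof (induction c)
  case (Suc c)
  then show ?case by (simp add: numeral_2_eq_2 algebra_simps)
qed simp

definition graph_edges :: "'a set \<Rightarrow> ('a \<Rightarrow> 'a \<Rightarrow> bool) \<Rightarrow> 'a set set" where
  "graph_edges V adj = {{u, v} | u v. u \<in> V \<and> v \<in> V \<and> adj u v}"

lemma num_edges_eq_card_graph_edges: "num_edges V adj = card (graph_edges V adj)"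
  by (simp add: num_edges_def graph_edges_def)

lemma finite_graph_edges: "finite V \<Longrightarrow> finite (graph_edges V adj)"
  by (rule finite_subset[of _ "Pow V"]) (auto simp: graph_edges_def)

lemma card_graph_edge:
  assumes "simple_graph V adj" and "e \<in> graph_edges V adj"
  shows "card e = 2"
  using assms by (auto simp: simple_graph_def graph_edges_def)

lemma degree_eq_card_incident_edges:
  assumes sg: "simple_graph V adj" and "v \<in> V"
  shows "degree V adj v = card {e \<in> graph_edges V adj. v \<in> e}"
  unfolding degree_def
proof (rule bij_betw_same_card[of "\<lambda>u. {v, u}"], rule bij_betwI')
  fix e assume "e \<in> {e \<in> graph_edges V adj. v \<in> e}"
  then obtain a b where e: "e = {a, b}" "adj a b" "v \<in> e"
    by (auto simp: graph_edges_def)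
  then have "a \<in> V" "b \<in> V" "adj b a" using sg by (auto simp: simple_graph_def)
  then show "\<exists>u \<in> {u \<in> V. adj v u}. e = {v, u}" using e by auto
qed (use assms in \<open>auto simp: graph_edges_def doubleton_eq_iff\<close>)

lemma sum_degree_eq_twice_num_edges:
  assumes sg: "simple_graph V adj"
  shows "(\<Sum>v\<in>V. degree V adj v) = 2 * num_edges V adj"
proof -
  have "finite V" using sg by (simp add: simple_graph_def)
  have "(\<Sum>v\<in>V. card {e \<in> graph_edges V adj. v \<in> e}) = 2 * card (graph_edges V adj)"
  proof (rule sum_multicount)
    show "\<forall>e \<in> graph_edges V adj. card {v \<in> V. v \<in> e} = 2"
    proof
      fix e assume e: "e \<in> graph_edges V adj"
      then have "{v \<in> V. v \<in> e} = e" by (auto simp: graph_edges_def)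
      then show "card {v \<in> V. v \<in> e} = 2" using card_graph_edge[OF sg e] by simp
    qed
  qed (use \<open>finite V\<close> finite_graph_edges in auto)
  then show ?thesis
    using degree_eq_card_incident_edges[OF sg] by (simp add: num_edges_eq_card_graph_edges)
qed

lemma num_edges_le_choose_plus_sum_degree:
  assumes sg: "simple_graph V adj" and "C \<subseteq> V"
  shows "num_edges V adj \<le> (card C choose 2) + (\<Sum>v\<in>V - C. degree V adj v)"
proof -
  let ?inside = "{B. B \<subseteq> C \<and> card B = 2}"
  let ?incident = "\<lambda>v. {e \<in> graph_edges V adj. v \<in> e}"
  have "finite V" using sg by (simp add: simple_graph_def)
  then have "finite C" using \<open>C \<subseteq> V\<close> finite_subset by blast
  have "graph_edges V adj \<subseteq> ?inside \<union> (\<Union>v\<in>V - C. ?incident v)"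
  proof
    fix e assume e: "e \<in> graph_edges V adj"
    then have "e \<subseteq> V" by (auto simp: graph_edges_def)
    then show "e \<in> ?inside \<union> (\<Union>v\<in>V - C. ?incident v)"
      using e card_graph_edge[OF sg e] by blast
  qed
  then have "num_edges V adj \<le> card (?inside \<union> (\<Union>v\<in>V - C. ?incident v))"
    unfolding num_edges_eq_card_graph_edges
    using \<open>finite C\<close> \<open>finite V\<close> finite_graph_edges[OF \<open>finite V\<close>] by (intro card_mono) auto
  also have "\<dots> \<le> card ?inside + card (\<Union>v\<in>V - C. ?incident v)"
    by (rule card_Un_le)
  also have "\<dots> \<le> (card C choose 2) + (\<Sum>v\<in>V - C. card (?incident v))"
    using n_subsets[OF \<open>finite C\<close>, of 2] card_UN_le \<open>finite V\<close> by (intro add_mono) auto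
  also have "\<dots> = (card C choose 2) + (\<Sum>v\<in>V - C. degree V adj v)"
    using degree_eq_card_incident_edges[OF sg] by simp
  finally show ?thesis .
qed

lemma degree_le_card_minus_one:
  assumes sg: "simple_graph V adj" and "v \<in> V"
  shows "degree V adj v \<le> card V - 1"
proof -
  have "finite V" and "{u \<in> V. adj v u} \<subseteq> V - {v}" using sg by (auto simp: simple_graph_def)
  then have "degree V adj v \<le> card (V - {v})" unfolding degree_def by (intro card_mono) auto
  then show ?thesis using \<open>v \<in> V\<close> \<open>finite V\<close> by simp
qed

lemma finite_clique_cards: "finite V \<Longrightarrow> finite {card S | S. is_clique V adj S}"
  by (rule finite_subset[of _ "{..card V}"]) (auto simp: is_clique_def card_mono)

lemma card_le_clique_number:
  "finite V \<Longrightarrow> is_clique V adj S \<Longrightarrow> card S \<le> clique_number V adj"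
  unfolding clique_number_def using finite_clique_cards by (intro Max_ge) auto

lemma obtain_maximum_clique:
  assumes "finite V"
  obtains C where "is_clique V adj C" "card C = clique_number V adj"
proof -
  have "is_clique V adj {}" by (simp add: is_clique_def)
  then have "{card S | S. is_clique V adj S} \<noteq> {}" by blast
  from Max_in[OF finite_clique_cards[OF assms] this] show ?thesis
    using that unfolding clique_number_def by auto
qed

lemma degree_plus_card_le_if_maximum_clique:
  assumes sg: "simple_graph V adj" and closed: "l_closed l V adj"
    and C: "is_clique V adj C" "card C = clique_number V adj" and v: "v \<in> V - C"
  shows "int (degree V adj v) + int (card C) \<le> l"
proof -
  have "finite V" using sg by (simp add: simple_graph_def)
  have "C \<subseteq> V" using C by (simp add: is_clique_def)
  then have "finite C" using \<open>finite V\<close> finite_subset by blast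
  have "\<not> is_clique V adj (insert v C)"
  proof
    assume "is_clique V adj (insert v C)"
    then have "card (insert v C) \<le> card C"
      using card_le_clique_number[OF \<open>finite V\<close>] C(2) by simp
    then show False using v \<open>finite C\<close> by simp
  qed
  then obtain w where w: "w \<in> C" "\<not> adj v w"
    using C(1) v sg unfolding is_clique_def simple_graph_def by blast
  have "C - {w} \<subseteq> {u \<in> V. adj w u}" using C(1) w(1) by (auto simp: is_clique_def)
  then have "card (C - {w}) \<le> degree V adj w"
    unfolding degree_def using \<open>finite V\<close> by (intro card_mono) auto
  then have "card C - 1 \<le> degree V adj w" using w(1) \<open>finite C\<close> by simp
  moreover have "w \<in> V" "v \<noteq> w" using w(1) v \<open>C \<subseteq> V\<close> by auto
  then have "int (degree V adj v + degree V adj w) < l"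
    using closed v w(2) unfolding l_closed_def by blast
  moreover have "card C \<ge> 1" using w(1) \<open>finite C\<close> card_0_eq by fastforce
  ultimately show ?thesis by linarith
qed

lemma is_clique_high_degree_vertices:
  assumes "l_closed l V adj"
  shows "is_clique V adj {v \<in> V. l \<le> 2 * int (degree V adj v)}"
  using assms unfolding is_clique_def l_closed_def by fastforce

lemma num_edges_le_via_maximum_clique:
  assumes sg: "simple_graph V adj" and closed: "l_closed l V adj"
  defines "\<omega> \<equiv> int (clique_number V adj)" and "N \<equiv> int (card V)"
  shows "2 * int (num_edges V adj) \<le> \<omega> * (\<omega> - 1) + 2 * (N - \<omega>) * (l - \<omega>)"
proof -
  have "finite V" using sg by (simp add: simple_graph_def)
  obtain C where C: "is_clique V adj C" "card C = clique_number V adj"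
    using obtain_maximum_clique[OF \<open>finite V\<close>] .
  have "C \<subseteq> V" using C by (simp add: is_clique_def)
  have "(\<Sum>v\<in>V - C. int (degree V adj v)) \<le> (\<Sum>v\<in>V - C. l - \<omega>)"
    using degree_plus_card_le_if_maximum_clique[OF sg closed C] C(2)
    unfolding \<omega>_def by (intro sum_mono) fastforce
  also have "\<dots> = (N - \<omega>) * (l - \<omega>)"
    using \<open>finite V\<close> \<open>C \<subseteq> V\<close> C(2) card_mono[OF \<open>finite V\<close> \<open>C \<subseteq> V\<close>]
    by (simp add: N_def \<omega>_def card_Diff_subset finite_subset of_nat_diff)
  finally have "int (num_edges V adj) \<le> int (card C choose 2) + (N - \<omega>) * (l - \<omega>)"
    using num_edges_le_choose_plus_sum_degree[OF sg \<open>C \<subseteq> V\<close>] by (simp flip: of_nat_sum)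
  moreover have "2 * int (card C choose 2) = \<omega> * (\<omega> - 1)"
    using two_mult_choose_two[of "card C"] C(2) by (simp add: \<omega>_def)
  ultimately show ?thesis by linarith
qed

lemma num_edges_le_via_high_degree_vertices:
  assumes sg: "simple_graph V adj" and closed: "l_closed l V adj"
  defines "\<omega> \<equiv> int (clique_number V adj)" and "N \<equiv> int (card V)"
  assumes l_le: "l \<le> 2 * N - 1"
  shows "4 * int (num_edges V adj) \<le> 2 * \<omega> * (N - 1) + (N - \<omega>) * (l - 1)"
proof -
  define A where "A = {v \<in> V. l \<le> 2 * int (degree V adj v)}"
  have "finite V" using sg by (simp add: simple_graph_def)
  have "A \<subseteq> V" by (auto simp: A_def)
  have "card A \<le> clique_number V adj"
    using card_le_clique_number[OF \<open>finite V\<close> is_clique_high_degree_vertices[OF closed]]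
    by (simp add: A_def)
  have "4 * int (num_edges V adj) = 2 * (\<Sum>v\<in>V. int (degree V adj v))"
    using sum_degree_eq_twice_num_edges[OF sg] by (simp flip: of_nat_sum)
  also have "\<dots> = 2 * (\<Sum>v\<in>A. int (degree V adj v)) + (\<Sum>v\<in>V - A. 2 * int (degree V adj v))"
    using sum.subset_diff[OF \<open>A \<subseteq> V\<close> \<open>finite V\<close>, of "\<lambda>v. 2 * int (degree V adj v)"]
    by (simp add: sum_distrib_left add.commute)
  also have "\<dots> \<le> 2 * (\<Sum>v\<in>A. N - 1) + (\<Sum>v\<in>V - A. l - 1)"
  proof (intro add_mono mult_left_mono sum_mono)
    fix v assume "v \<in> A"
    then have "v \<in> V" "card V > 0" using \<open>A \<subseteq> V\<close> \<open>finite V\<close> card_gt_0_iff by auto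
    then show "int (degree V adj v) \<le> N - 1"
      using degree_le_card_minus_one[OF sg] unfolding N_def by fastforce
  qed (auto simp: A_def)
  also have "\<dots> = 2 * int (card A) * (N - 1) + (N - int (card A)) * (l - 1)"
    using \<open>finite V\<close> \<open>A \<subseteq> V\<close> card_mono[OF \<open>finite V\<close> \<open>A \<subseteq> V\<close>]
    by (simp add: N_def card_Diff_subset finite_subset of_nat_diff)
  also have "\<dots> \<le> 2 * \<omega> * (N - 1) + (N - \<omega>) * (l - 1)"
  proof -
    have "0 \<le> (\<omega> - int (card A)) * (2 * (N - 1) - (l - 1))"
      using \<open>card A \<le> clique_number V adj\<close> l_le unfolding \<omega>_def by simp
    then show ?thesis by (simp add: algebra_simps)
  qed
  finally show ?thesis .
qed

lemma convex_quadratic_le: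
  fixes f :: "'a::linordered_idom \<Rightarrow> 'a"
  assumes f: "\<And>z. f z = a * z^2 + b * z + c" and "0 \<le> a"
    and "x \<le> w" "w \<le> y" and "f x \<le> M" "f y \<le> M"
  shows "f w \<le> M"
proof (cases "x = y")
  case True
  then show ?thesis using assms by simp
next
  case False
  then have "0 < y - x" using assms by simp
  have "(y - w) * f x + (w - x) * f y - (y - x) * f w = a * (y - x) * (w - x) * (y - w)"
    unfolding f by (simp add: algebra_simps power2_eq_square)
  also have "\<dots> \<ge> 0" using assms by simp
  finally have "(y - x) * f w \<le> (y - w) * f x + (w - x) * f y" by simp
  also have "\<dots> \<le> (y - w) * M + (w - x) * M"
    using assms by (intro add_mono mult_left_mono) auto
  also have "\<dots> = (y - x) * M" by (simp add: algebra_simps)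
  finally show ?thesis using \<open>0 < y - x\<close> by simp
qed

lemma edge_bounds_at_half:
  fixes n K m :: int
  assumes "1 \<le> m" "m \<le> K" "7 * K + 5 * m + 4 \<le> n"
  defines "p \<equiv> (n - K) div 2" and "l \<equiv> n - K + m - 1"
    and "M \<equiv> (n - K - 2) * (n - K - 3) + 2 * (K + 2) * (m + 1) + 2"
  shows "2 * p * (n - 1) + (n - p) * (l - 1) < 2 * M"
    and "(p + 1) * p + 2 * (n - p - 1) * (l - p - 1) < M"
proof -
  txt \<open>In the slack variables \<open>i\<close>, \<open>j\<close>, \<open>u\<close> and the parity \<open>q\<close> of \<open>n - K\<close> both differences
    are polynomials with nonnegative coefficients, apart from the constant \<open>-8\<close> when \<open>q = 0\<close>,
    which is then outweighed since \<open>u \<ge> 1\<close>.\<close>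
  define q where "q = (n - K) mod 2"
  define i j u where "i = m - 1" and "j = K - m" and "u = p - (3 * K + 2 * m + 2)"
  have q: "q = 0 \<or> q = 1" by (auto simp: q_def)
  have slack: "0 \<le> i" "0 \<le> j" "0 \<le> u" "q = 0 \<Longrightarrow> 1 \<le> u"
    using assms(1-3) q unfolding i_def j_def u_def p_def q_def by auto
  have eqs: "m = 1 + i" "K = m + j" "p = 3 * K + 2 * m + 2 + u" "n = K + 2 * p + q"
    unfolding i_def j_def u_def p_def q_def by auto
  have nonneg: "0 \<le> i * j" "0 \<le> i * u" "0 \<le> j * u" "0 \<le> i * i" "0 \<le> j * j" "0 \<le> u * u"
    using slack by auto
  show "2 * p * (n - 1) + (n - p) * (l - 1) < 2 * M"
    using q
  proof
    assume "q = 0"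
    then have "2 * M - (2 * p * (n - 1) + (n - p) * (l - 1))
      = -8 + 20*i + 28*i*j + 15*i*u + 28*i*i + 2*j + 8*j*u + 6*j*j + 7*u + 2*u*u"
      unfolding M_def l_def eqs by (simp add: algebra_simps)
    moreover have "1 \<le> u" using slack(4) \<open>q = 0\<close> .
    moreover from this have "u \<le> u * u" using mult_right_mono[of 1 u u] by simp
    ultimately show ?thesis using slack nonneg by linarith
  next
    assume "q = 1"
    then have "2 * M - (2 * p * (n - 1) + (n - p) * (l - 1))
      = 4 + 33*i + 28*i*j + 15*i*u + 28*i*i + 10*j + 8*j*u + 6*j*j + 10*u + 2*u*u"
      unfolding M_def l_def eqs by (simp add: algebra_simps)
    then show ?thesis using slack nonneg by linarith
  qed
  show "(p + 1) * p + 2 * (n - p - 1) * (l - p - 1) < M"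
    using q
  proof
    assume "q = 0"
    then have "M - ((p + 1) * p + 2 * (n - p - 1) * (l - p - 1))
      = 6 + 9*i + 8*i*j + 6*i*u + 5*i*i + 7*j + 4*j*u + 3*j*j + 5*u + u*u"
      unfolding M_def l_def eqs by (simp add: algebra_simps)
    then show ?thesis using slack nonneg by linarith
  next
    assume "q = 1"
    then have "M - ((p + 1) * p + 2 * (n - p - 1) * (l - p - 1))
      = 2 + 5*i + 8*i*j + 6*i*u + 5*i*i + 5*j + 4*j*u + 3*j*j + 5*u + u*u"
      unfolding M_def l_def eqs by (simp add: algebra_simps)
    then show ?thesis using slack nonneg by linarith
  qed
qed

lemma edges_below_threshold_if_closed_bounds:
  fixes n K m w e :: int
  assumes "1 \<le> m" "m \<le> K" "7 * K + 5 * m + 4 \<le> n" "0 \<le> w" "w \<le> n - K - 2"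
  defines "l \<equiv> n - K + m - 1"
  assumes quadratic: "2 * e \<le> w * (w - 1) + 2 * (n - w) * (l - w)"
    and linear: "4 * e \<le> 2 * w * (n - 1) + (n - w) * (l - 1)"
  shows "2 * e < (n - K - 2) * (n - K - 3) + 2 * (K + 2) * (m + 1) + 2"
proof -
  define p where "p = (n - K) div 2"
  define M where "M = (n - K - 2) * (n - K - 3) + 2 * (K + 2) * (m + 1) + 2"
  note half = edge_bounds_at_half[OF assms(1-3), folded p_def l_def M_def]
  have "2 * e < M"
  proof (cases "w \<le> p")
    case True
    have "2 * w * (n - 1) + (n - w) * (l - 1) + (p - w) * (n + K - m)
        = 2 * p * (n - 1) + (n - p) * (l - 1)"
      unfolding l_def by (simp add: algebra_simps)
    moreover have "0 \<le> (p - w) * (n + K - m)" using True assms(1-3) by simp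
    ultimately show ?thesis using linear half(1) by linarith
  next
    case False
    let ?f = "\<lambda>z. z * (z - 1) + 2 * (n - z) * (l - z)"
    have "?f w \<le> M - 1"
    proof (rule convex_quadratic_le[of ?f 3 "- 1 - 2 * n - 2 * l" "2 * n * l"])
      show "?f z = 3 * z\<^sup>2 + (- 1 - 2 * n - 2 * l) * z + 2 * n * l" for z
        by (simp add: algebra_simps power2_eq_square)
      show "?f (p + 1) \<le> M - 1" using half(2) by (simp add: algebra_simps)
      show "?f (n - K - 2) \<le> M - 1" unfolding M_def l_def by (simp add: algebra_simps)
    qed (use False assms(5) in auto)
    then show ?thesis using quadratic by linarith
  qed
  then show ?thesis unfolding M_def .
qed

lemma edge_threshold_le_twice_num_edges_int:
  fixes k m n e :: nat
  defines "K \<equiv> (k - 1) * m"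
  assumes "2 \<le> k" and "K + 2 \<le> n"
    and "((n - K - 2) choose 2) + (k - 1) * m^2 + (k + 1) * m + 3 \<le> e"
  shows "(int n - int K - 2) * (int n - int K - 3) + 2 * (int K + 2) * (int m + 1) + 2 \<le> 2 * int e"
proof -
  obtain j where "k = j + 2" using assms(2) le_Suc_ex by (metis add.commute)
  then have "(k - 1) * m^2 + (k + 1) * m + 3 = (K + 2) * (m + 1) + 1"
    by (simp add: K_def power2_eq_square algebra_simps)
  then have "((n - K - 2) choose 2) + (K + 2) * (m + 1) + 1 \<le> e"
    using assms(4) by linarith
  then have "int ((n - K - 2) choose 2) + (int K + 2) * (int m + 1) + 1 \<le> int e"
    using of_nat_mono[where 'a = int] by (fastforce simp: algebra_simps)
  moreover have "2 * int ((n - K - 2) choose 2) = (int n - int K - 2) * (int n - int K - 3)"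
    using two_mult_choose_two[of "n - K - 2"] assms(3) by (simp add: of_nat_diff)
  ultimately show ?thesis by linarith
qed

theorem lemma3p1:
  fixes V :: "'a set" and adj :: "'a \<Rightarrow> 'a \<Rightarrow> bool" and m k n :: nat
  assumes "simple_graph V adj"
    and "m \<ge> 1" and "k \<ge> 2"
    and "card V = n"
    and "k_connected m V adj"
    and "l_closed (int n - int k * int m + 2 * int m - 1) V adj"
    and "n \<ge> (7 * k - 2) * m + 4"
    and "num_edges V adj \<ge> ((n - (k - 1) * m - 2) choose 2) + (k - 1) * m^2 + (k + 1) * m + 3"
  shows "clique_number V adj \<ge> n - (k - 1) * m - 1"
proof (rule ccontr)
  define K where "K = (k - 1) * m"
  assume "\<not> clique_number V adj \<ge> n - (k - 1) * m - 1"
  then have small: "clique_number V adj < n - K - 1" by (simp add: K_def)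
  have "1 \<le> k - 1" using assms(3) by arith
  then have "m \<le> K" using mult_le_mono1[of 1 "k - 1" m] by (simp add: K_def)
  have large: "7 * K + 5 * m + 4 \<le> n"
    using assms(3,7) by (simp add: K_def algebra_simps diff_mult_distrib)
  have "int n - int k * int m + 2 * int m - 1 = int n - int K + int m - 1"
    using assms(3) by (simp add: K_def of_nat_diff algebra_simps)
  with assms(6) have closed: "l_closed (int n - int K + int m - 1) V adj" by simp
  have "(int n - int K - 2) * (int n - int K - 3) + 2 * (int K + 2) * (int m + 1) + 2
      \<le> 2 * int (num_edges V adj)"
    using edge_threshold_le_twice_num_edges_int[OF assms(3) _ assms(8), folded K_def] large by simp
  moreover have "2 * int (num_edges V adj)
      < (int n - int K - 2) * (int n - int K - 3) + 2 * (int K + 2) * (int m + 1) + 2"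
  proof (rule edges_below_threshold_if_closed_bounds)
    show "2 * int (num_edges V adj) \<le> int (clique_number V adj) * (int (clique_number V adj) - 1)
        + 2 * (int n - int (clique_number V adj)) * (int n - int K + int m - 1 - int (clique_number V adj))"
      using num_edges_le_via_maximum_clique[OF assms(1) closed] assms(4) by simp
    show "4 * int (num_edges V adj) \<le> 2 * int (clique_number V adj) * (int n - 1)
        + (int n - int (clique_number V adj)) * (int n - int K + int m - 1 - 1)"
      using num_edges_le_via_high_degree_vertices[OF assms(1) closed] assms(4) \<open>m \<le> K\<close> by simp
  qed (use assms(2) \<open>m \<le> K\<close> large small in auto)
  ultimately show False by linarith
qed

end
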